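(* Let $V=2V_2\oplus V_4$ and $R=\mathcal{O}(V)^{\mathrm{SL}_2(\mathbb{C})}$. Then $R$ has no homogeneous system of parameters with degrees $2,2,2,2,3,3,3,4$; indeed, all invariants of degree $2$ or $3$ vanish at every point $(ax^2,bx^2,xy^3)$, $a,b\in\mathbb{C}$.
   Context: $V_k$ is the $\mathrm{SL}_2(\mathbb{C})$-module of complex binary forms of degree $k$ in $x,y$; $2V_2=V_2\oplus V_2$; $R$ is the graded algebra of invariant polynomial functions on $V$. A homogeneous system of parameters is a set of algebraically independent homogeneous elements of positive degree over whose generated subalgebra $R$ is integral. *)

theory Defs
  imports Complex_Main "HOL-Library.Poly_Mapping" "HOL-Library.Multiset"
begin

text \<open>A point of V = V_2 + V_2 + V_4 is a coefficient vector v :: nat => complex,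
  using coordinates 0..10: v 0..v 2 are the coefficients of the first quadratic form,
  v 3..v 5 those of the second quadratic form, v 6..v 10 those of the quartic.\<close>

definition bform :: "nat \<Rightarrow> (nat \<Rightarrow> complex) \<Rightarrow> complex \<Rightarrow> complex \<Rightarrow> complex" where
  "bform k c x y = (\<Sum>i\<le>k. c i * x ^ (k - i) * y ^ i)"

definition comp1 :: "(nat \<Rightarrow> complex) \<Rightarrow> nat \<Rightarrow> complex" where
  "comp1 v = (\<lambda>i. v i)"
definition comp2 :: "(nat \<Rightarrow> complex) \<Rightarrow> nat \<Rightarrow> complex" where
  "comp2 v = (\<lambda>i. v (3 + i))"
definition comp3 :: "(nat \<Rightarrow> complex) \<Rightarrow> nat \<Rightarrow> complex" where
  "comp3 v = (\<lambda>i. v (6 + i))"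

definition sl2_rel :: "complex \<Rightarrow> complex \<Rightarrow> complex \<Rightarrow> complex \<Rightarrow>
    (nat \<Rightarrow> complex) \<Rightarrow> (nat \<Rightarrow> complex) \<Rightarrow> bool" where
  "sl2_rel a b c d v w \<longleftrightarrow>
     (\<forall>x y. bform 2 (comp1 w) x y = bform 2 (comp1 v) (a*x + b*y) (c*x + d*y)) \<and>
     (\<forall>x y. bform 2 (comp2 w) x y = bform 2 (comp2 v) (a*x + b*y) (c*x + d*y)) \<and>
     (\<forall>x y. bform 4 (comp3 w) x y = bform 4 (comp3 v) (a*x + b*y) (c*x + d*y))"

definition sl2_invariant :: "((nat \<Rightarrow> complex) \<Rightarrow> complex) \<Rightarrow> bool" where
  "sl2_invariant F \<longleftrightarrow>
     (\<forall>a b c d v w. a*d - b*c = 1 \<longrightarrow> sl2_rel a b c d v w \<longrightarrow> F w = F v)"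

inductive poly_fun :: "((nat \<Rightarrow> complex) \<Rightarrow> complex) \<Rightarrow> bool" where
  pf_const: "poly_fun (\<lambda>_. k)"
| pf_coord: "i < 11 \<Longrightarrow> poly_fun (\<lambda>v. v i)"
| pf_add: "poly_fun f \<Longrightarrow> poly_fun g \<Longrightarrow> poly_fun (\<lambda>v. f v + g v)"
| pf_mult: "poly_fun f \<Longrightarrow> poly_fun g \<Longrightarrow> poly_fun (\<lambda>v. f v * g v)"

inductive hom_poly :: "nat \<Rightarrow> ((nat \<Rightarrow> complex) \<Rightarrow> complex) \<Rightarrow> bool" where
  hp_const: "hom_poly 0 (\<lambda>_. k)"
| hp_coord: "i < 11 \<Longrightarrow> hom_poly 1 (\<lambda>v. v i)"
| hp_add: "hom_poly n f \<Longrightarrow> hom_poly n g \<Longrightarrow> hom_poly n (\<lambda>v. f v + g v)"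
| hp_mult: "hom_poly n f \<Longrightarrow> hom_poly m g \<Longrightarrow> hom_poly (n + m) (\<lambda>v. f v * g v)"

definition invR :: "((nat \<Rightarrow> complex) \<Rightarrow> complex) set" where
  "invR = {F. poly_fun F \<and> sl2_invariant F}"

inductive alg_gen :: "((nat \<Rightarrow> complex) \<Rightarrow> complex) list \<Rightarrow> ((nat \<Rightarrow> complex) \<Rightarrow> complex) \<Rightarrow> bool"
  for fs where
  ag_const: "alg_gen fs (\<lambda>_. k)"
| ag_gen: "i < length fs \<Longrightarrow> alg_gen fs (fs ! i)"
| ag_add: "alg_gen fs f \<Longrightarrow> alg_gen fs g \<Longrightarrow> alg_gen fs (\<lambda>v. f v + g v)"
| ag_mult: "alg_gen fs f \<Longrightarrow> alg_gen fs g \<Longrightarrow> alg_gen fs (\<lambda>v. f v * g v)"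

definition mpoly_eval :: "((nat \<Rightarrow>\<^sub>0 nat) \<Rightarrow>\<^sub>0 complex) \<Rightarrow>
    ((nat \<Rightarrow> complex) \<Rightarrow> complex) list \<Rightarrow> (nat \<Rightarrow> complex) \<Rightarrow> complex" where
  "mpoly_eval P fs v = (\<Sum>m\<in>Poly_Mapping.keys P. Poly_Mapping.lookup P m * (\<Prod>i<length fs. (fs ! i) v ^ Poly_Mapping.lookup m i))"

definition alg_indep :: "((nat \<Rightarrow> complex) \<Rightarrow> complex) list \<Rightarrow> bool" where
  "alg_indep fs \<longleftrightarrow>
     (\<forall>P. (\<forall>m\<in>Poly_Mapping.keys P. Poly_Mapping.keys m \<subseteq> {..<length fs}) \<longrightarrow> (\<forall>v. mpoly_eval P fs v = 0) \<longrightarrow> P = 0)"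

definition integral_over :: "((nat \<Rightarrow> complex) \<Rightarrow> complex) list \<Rightarrow> ((nat \<Rightarrow> complex) \<Rightarrow> complex) \<Rightarrow> bool" where
  "integral_over fs r \<longleftrightarrow>
     (\<exists>n cs. n > 0 \<and> (\<forall>i<n. alg_gen fs (cs i)) \<and>
        (\<forall>v. r v ^ n + (\<Sum>i<n. cs i v * r v ^ i) = 0))"

definition is_hsop :: "((nat \<Rightarrow> complex) \<Rightarrow> complex) list \<Rightarrow> nat list \<Rightarrow> bool" where
  "is_hsop fs ds \<longleftrightarrow> length fs = length ds \<and>
     (\<forall>i<length fs. fs ! i \<in> invR \<and> ds ! i > 0 \<and> hom_poly (ds ! i) (fs ! i)) \<and>
     alg_indep fs \<and> (\<forall>r\<in>invR. integral_over fs r)"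

text \<open>The point (a x^2, b x^2, x y^3).\<close>
definition special_pt :: "complex \<Rightarrow> complex \<Rightarrow> nat \<Rightarrow> complex" where
  "special_pt a b = (\<lambda>i. if i = 0 then a else if i = 3 then b else if i = 9 then 1 else 0)"

end

(*
  Write p(a,b) = (a x^2, b x^2, x y^3).  The substitution diag(i, -i) maps p(a,b) to -p(a,b),
  so invariants of odd degree vanish there; for a quadratic invariant, torus weights and one
  unipotent substitution leave no monomial that is non-zero at p(a,b).  A quartic invariant F
  satisfies F(p(sa,sb)) = s^2 F(p(a,b)), via diag(t, 1/t) with t^4 = s, so it vanishes at some
  p(a,b) with (a,b) <> 0.  Hence every member of a system of parameters of degrees
  2,2,2,2,3,3,3,4 vanishes at such a point, while the quartic invariant disc((q_1, f)_2)
  (or disc((q_2, f)_2)) takes the value 36 a^2 (resp. 36 b^2) there.  Restricted to the line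
  through that point, an integral equation for it becomes a monic polynomial with constant
  coefficients vanishing on all of C, which is impossible.
*)

theory Submission
  imports Defs "HOL-Computational_Algebra.Fundamental_Theorem_Algebra"
begin

section \<open>Binary forms and the substitution action\<close>

lemma bform_eq_poly: "bform n c x 1 = poly (\<Sum>i\<le>n. monom (c i) (n - i)) x"
  by (simp add: bform_def poly_sum poly_monom)

lemma coeff_bform_poly:
  assumes "k \<le> n"
  shows "coeff (\<Sum>i\<le>n. monom (c i) (n - i)) (n - k) = c k"
proof -
  have "coeff (\<Sum>i\<le>n. monom (c i) (n - i)) (n - k) = (\<Sum>i\<le>n. if i = k then c i else 0)"
    unfolding coeff_sum coeff_monom using assms by (intro sum.cong) auto
  also have "\<dots> = c k" using assms by simp
  finally show ?thesis .
qed

lemma bform_coeffs_unique: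
  assumes "\<forall>x y. bform n p x y = bform n q x y" and "k \<le> n"
  shows "p k = q k"
proof -
  have "poly (\<Sum>i\<le>n. monom (p i) (n - i)) = poly (\<Sum>i\<le>n. monom (q i) (n - i))"
    using assms(1) by (auto simp flip: bform_eq_poly)
  then have "(\<Sum>i\<le>n. monom (p i) (n - i)) = (\<Sum>i\<le>n. monom (q i) (n - i))"
    by (simp add: poly_eq_poly_eq_iff)
  then show ?thesis using coeff_bform_poly[OF assms(2)] by metis
qed

definition quad_subst :: "complex \<Rightarrow> complex \<Rightarrow> complex \<Rightarrow> complex \<Rightarrow> (nat \<Rightarrow> complex) \<Rightarrow> nat \<Rightarrow> complex" where
  "quad_subst a b c d u k =
     (if k = 0 then u 0 * a^2 + u 1 * a * c + u 2 * c^2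
      else if k = 1 then 2 * u 0 * a * b + u 1 * (a * d + b * c) + 2 * u 2 * c * d
      else u 0 * b^2 + u 1 * b * d + u 2 * d^2)"

definition quartic_subst :: "complex \<Rightarrow> complex \<Rightarrow> complex \<Rightarrow> complex \<Rightarrow> (nat \<Rightarrow> complex) \<Rightarrow> nat \<Rightarrow> complex" where
  "quartic_subst a b c d g k =
     (if k = 0 then g 0 * a^4 + g 1 * a^3 * c + g 2 * a^2 * c^2 + g 3 * a * c^3 + g 4 * c^4
      else if k = 1 then 4 * g 0 * a^3 * b + g 1 * (a^3 * d + 3 * a^2 * b * c)
        + g 2 * (2 * a^2 * c * d + 2 * a * b * c^2) + g 3 * (3 * a * c^2 * d + b * c^3) + 4 * g 4 * c^3 * d
      else if k = 2 then 6 * g 0 * a^2 * b^2 + g 1 * (3 * a^2 * b * d + 3 * a * b^2 * c)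
        + g 2 * (a^2 * d^2 + 4 * a * b * c * d + b^2 * c^2) + g 3 * (3 * a * c * d^2 + 3 * b * c^2 * d)
        + 6 * g 4 * c^2 * d^2
      else if k = 3 then 4 * g 0 * a * b^3 + g 1 * (3 * a * b^2 * d + b^3 * c)
        + g 2 * (2 * a * b * d^2 + 2 * b^2 * c * d) + g 3 * (a * d^3 + 3 * b * c * d^2) + 4 * g 4 * c * d^3
      else g 0 * b^4 + g 1 * b^3 * d + g 2 * b^2 * d^2 + g 3 * b * d^3 + g 4 * d^4)"

lemma atMost_2_eq: "{..2::nat} = {0, 1, 2}" by auto

lemma atMost_4_eq: "{..4::nat} = {0, 1, 2, 3, 4}" by auto

lemma bform_quad_subst: "bform 2 u (a*x + b*y) (c*x + d*y) = bform 2 (quad_subst a b c d u) x y"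
  by (simp add: bform_def atMost_2_eq quad_subst_def power2_eq_square algebra_simps)

lemma bform_quartic_subst: "bform 4 g (a*x + b*y) (c*x + d*y) = bform 4 (quartic_subst a b c d g) x y"
  by (simp add: bform_def atMost_4_eq quartic_subst_def power2_eq_square power3_eq_cube
      power4_eq_xxxx algebra_simps)

lemma bform_cong: "(\<And>k. k \<le> n \<Longrightarrow> p k = q k) \<Longrightarrow> bform n p x y = bform n q x y"
  unfolding bform_def by (rule sum.cong) auto

lemma sl2_rel_iff_components:
  "sl2_rel a b c d v w \<longleftrightarrow>
     (\<forall>k\<le>2. comp1 w k = quad_subst a b c d (comp1 v) k) \<and>
     (\<forall>k\<le>2. comp2 w k = quad_subst a b c d (comp2 v) k) \<and>
     (\<forall>k\<le>4. comp3 w k = quartic_subst a b c d (comp3 v) k)"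
  unfolding sl2_rel_def bform_quad_subst bform_quartic_subst
  by (meson bform_coeffs_unique bform_cong)

definition subst_act :: "complex \<Rightarrow> complex \<Rightarrow> complex \<Rightarrow> complex \<Rightarrow> (nat \<Rightarrow> complex) \<Rightarrow> nat \<Rightarrow> complex" where
  "subst_act a b c d v i =
     (if i < 3 then quad_subst a b c d (comp1 v) i
      else if i < 6 then quad_subst a b c d (comp2 v) (i - 3)
      else quartic_subst a b c d (comp3 v) (i - 6))"

lemma sl2_rel_subst_act: "sl2_rel a b c d v (subst_act a b c d v)"
  unfolding sl2_rel_iff_components by (simp add: subst_act_def comp1_def comp2_def comp3_def)

lemma sl2_invariant_subst_act:
  "sl2_invariant F \<Longrightarrow> a * d - b * c = 1 \<Longrightarrow> F (subst_act a b c d v) = F v"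
  unfolding sl2_invariant_def using sl2_rel_subst_act by blast

section \<open>Homogeneous polynomial functions\<close>

lemma hom_poly_scale: "hom_poly n f \<Longrightarrow> f (\<lambda>i. s * v i) = s ^ n * f v"
  by (induction rule: hom_poly.induct) (auto simp: algebra_simps power_add)

lemma hom_poly_on_line: "hom_poly n f \<Longrightarrow> \<exists>p. \<forall>s. f (\<lambda>i. u i + s * w i) = poly p s"
proof (induction rule: hom_poly.induct)
  case (hp_const k)
  show ?case by (intro exI[of _ "[:k:]"]) simp
next
  case (hp_coord i)
  show ?case by (intro exI[of _ "[:u i, w i:]"]) simp
next
  case (hp_add n f g)
  then obtain p q where "\<forall>s. f (\<lambda>i. u i + s * w i) = poly p s" "\<forall>s. g (\<lambda>i. u i + s * w i) = poly q s"
    by blast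
  then show ?case by (intro exI[of _ "p + q"]) simp
next
  case (hp_mult n f m g)
  then obtain p q where "\<forall>s. f (\<lambda>i. u i + s * w i) = poly p s" "\<forall>s. g (\<lambda>i. u i + s * w i) = poly q s"
    by blast
  then show ?case by (intro exI[of _ "p * q"]) simp
qed

lemma hom_poly_0_const: "hom_poly 0 f \<Longrightarrow> \<exists>k. \<forall>v. f v = k"
  by (induction "0::nat" f rule: hom_poly.induct) auto

lemma hom_poly_1_linear: "hom_poly 1 f \<Longrightarrow> \<exists>l. \<forall>v. f v = (\<Sum>i<11. l i * v i)"
proof (induction "1::nat" f rule: hom_poly.induct)
  case (hp_coord i)
  then show ?case by (intro exI[of _ "\<lambda>j. of_bool (j = i)"]) (simp add: if_distrib cong: if_cong)
next
  case (hp_add f g)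
  then obtain l l' where "\<forall>v. f v = (\<Sum>i<11. l i * v i)" "\<forall>v. g v = (\<Sum>i<11. l' i * v i)" by blast
  then show ?case by (intro exI[of _ "\<lambda>i. l i + l' i"]) (simp add: sum.distrib distrib_right)
next
  case (hp_mult n f m g)
  then consider "n = 0" "m = 1" | "n = 1" "m = 0" by linarith
  then obtain k l where "\<forall>v. f v * g v = k * (\<Sum>i<11. l i * v i)"
  proof cases
    case 1
    with hp_mult obtain k l where "\<forall>v. f v = k" "\<forall>v. g v = (\<Sum>i<11. l i * v i)"
      using hom_poly_0_const by blast
    then show ?thesis using that[of k l] by simp
  next
    case 2
    with hp_mult obtain k l where "\<forall>v. g v = k" "\<forall>v. f v = (\<Sum>i<11. l i * v i)"
      using hom_poly_0_const by blast
    then show ?thesis using that[of k l] by (simp add: mult.commute)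
  qed
  then show ?case by (intro exI[of _ "\<lambda>i. k * l i"]) (simp add: sum_distrib_left mult.assoc)
qed simp

lemma hom_poly_2_quadratic:
  "hom_poly 2 f \<Longrightarrow> \<exists>q. \<forall>v. f v = (\<Sum>i<11. \<Sum>j<11. q i j * v i * v j)"
proof (induction "2::nat" f rule: hom_poly.induct)
  case (hp_add f g)
  then obtain q q' where f: "\<forall>v. f v = (\<Sum>i<11. \<Sum>j<11. q i j * v i * v j)"
    and g: "\<forall>v. g v = (\<Sum>i<11. \<Sum>j<11. q' i j * v i * v j)" by blast
  have "f v + g v = (\<Sum>i<11. \<Sum>j<11. (q i j + q' i j) * v i * v j)" for v
    unfolding f[rule_format] g[rule_format] by (simp only: distrib_right sum.distrib)
  then show ?case by (intro exI[of _ "\<lambda>i j. q i j + q' i j"]) simp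
next
  case (hp_mult n f m g)
  consider "n = 1" "m = 1" | "n = 0" "m = 2" | "n = 2" "m = 0" using hp_mult(5) by linarith
  then show ?case
  proof cases
    case 1
    then obtain l l' where f: "\<forall>v. f v = (\<Sum>i<11. l i * v i)"
      and g: "\<forall>v. g v = (\<Sum>j<11. l' j * v j)"
      using hom_poly_1_linear hp_mult(1,3) by blast
    have "f v * g v = (\<Sum>i<11. \<Sum>j<11. (l i * l' j) * v i * v j)" for v
      unfolding f[rule_format] g[rule_format] sum_product by (simp add: mult_ac)
    then show ?thesis by (intro exI[of _ "\<lambda>i j. l i * l' j"]) simp
  next
    case 2
    then obtain k q where "\<forall>v. f v = k" "\<forall>v. g v = (\<Sum>i<11. \<Sum>j<11. q i j * v i * v j)"
      using hom_poly_0_const hp_mult(1,4) by blast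
    then show ?thesis by (intro exI[of _ "\<lambda>i j. k * q i j"]) (simp add: sum_distrib_left mult.assoc)
  next
    case 3
    then obtain k q where "\<forall>v. g v = k" "\<forall>v. f v = (\<Sum>i<11. \<Sum>j<11. q i j * v i * v j)"
      using hom_poly_0_const hp_mult(2,3) by blast
    then have "\<forall>v. f v * g v = k * (\<Sum>i<11. \<Sum>j<11. q i j * v i * v j)" by (simp add: mult.commute)
    then show ?thesis by (intro exI[of _ "\<lambda>i j. k * q i j"]) (simp add: sum_distrib_left mult.assoc)
  qed
qed simp_all

section \<open>Invariants of degree 2, 3 and 4 at the special points\<close>

lemma special_pt_vanishes_hom3:
  assumes "sl2_invariant F" and "hom_poly 3 F"
  shows "F (special_pt a b) = 0"
proof -
  have "subst_act \<i> 0 0 (-\<i>) (special_pt a b) = (\<lambda>i. (-1) * special_pt a b i)"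
    by (auto simp: fun_eq_iff subst_act_def special_pt_def comp1_def comp2_def comp3_def
        quad_subst_def quartic_subst_def power2_eq_square power3_eq_cube)
  moreover have "F (subst_act \<i> 0 0 (-\<i>) (special_pt a b)) = F (special_pt a b)"
    by (rule sl2_invariant_subst_act[OF assms(1)]) simp
  ultimately have "F (\<lambda>i. (-1) * special_pt a b i) = F (special_pt a b)" by simp
  then show ?thesis unfolding hom_poly_scale[OF assms(2)] by simp
qed

definition basis_sum :: "nat set \<Rightarrow> nat \<Rightarrow> complex" where
  "basis_sum S k = of_bool (k \<in> S)"

lemma special_pt_vanishes_hom2:
  assumes inv: "sl2_invariant F" and hom: "hom_poly 2 F"
  shows "F (special_pt a b) = 0"
proof -
  obtain q where F: "\<And>v. F v = (\<Sum>i<11. \<Sum>j<11. q i j * v i * v j)"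
    using hom_poly_2_quadratic[OF hom] by blast
  \<comment> \<open>Invariance under diag(2, 1/2) kills the coefficients of monomials of nonzero weight
    (e_0, e_3 have weight 2 and e_(6+k) weight 4 - 2k); invariance under y \<mapsto> x + y then
    relates the pairing of x^2 with x y^3 to that with y^4.\<close>
  have T: "\<And>v. F (subst_act 2 0 0 (1/2) v) = F v"
    and U: "\<And>v. F (subst_act 1 0 1 1 v) = F v"
    by (simp_all add: sl2_invariant_subst_act[OF inv])
  have lessThan_11: "{..<11::nat} = {0,1,2,3,4,5,6,7,8,9,10}" by (auto; presburger)
  note expand = F lessThan_11 subst_act_def basis_sum_def quad_subst_def quartic_subst_def
    comp1_def comp2_def comp3_def
  have q00: "q 0 0 = 0" using T[of "basis_sum {0}"] by (simp add: expand)
  have q33: "q 3 3 = 0" using T[of "basis_sum {3}"] by (simp add: expand)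
  have q99: "q 9 9 = 0" using T[of "basis_sum {9}"] by (simp add: expand power_divide)
  have q66: "q 6 6 = 0" using T[of "basis_sum {6}"] by (simp add: expand)
  have q77: "q 7 7 = 0" using T[of "basis_sum {7}"] by (simp add: expand)
  have q03: "q 0 3 + q 3 0 = 0" using T[of "basis_sum {0,3}"] q00 q33 by (simp add: expand, algebra)
  have q06: "q 0 6 + q 6 0 = 0" using T[of "basis_sum {0,6}"] q00 q66 by (simp add: expand, algebra)
  have q07: "q 0 7 + q 7 0 = 0" using T[of "basis_sum {0,7}"] q00 q77 by (simp add: expand, algebra)
  have q08: "q 0 8 + q 8 0 = 0" using T[of "basis_sum {0,8}"] q00 by (simp add: expand, algebra)
  have q36: "q 3 6 + q 6 3 = 0" using T[of "basis_sum {3,6}"] q33 q66 by (simp add: expand, algebra)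
  have q37: "q 3 7 + q 7 3 = 0" using T[of "basis_sum {3,7}"] q33 q77 by (simp add: expand, algebra)
  have q38: "q 3 8 + q 8 3 = 0" using T[of "basis_sum {3,8}"] q33 by (simp add: expand, algebra)
  have U10: "F (subst_act 1 0 1 1 (basis_sum {10})) = F (basis_sum {10})" by (rule U)
  have q09: "q 0 9 + q 9 0 = 0"
    using U[of "basis_sum {0,10}"] U10 q06 q07 q08 by (simp add: expand, algebra)
  have q39: "q 3 9 + q 9 3 = 0"
    using U[of "basis_sum {3,10}"] U10 q36 q37 q38 by (simp add: expand, algebra)
  have "F (special_pt a b) = q 0 0 * a * a + (q 0 3 + q 3 0) * a * b + q 3 3 * b * b
      + (q 0 9 + q 9 0) * a + (q 3 9 + q 9 3) * b + q 9 9"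
    by (simp add: F lessThan_11 special_pt_def algebra_simps)
  then show ?thesis using q00 q33 q99 q03 q09 q39 by simp
qed

lemma special_pt_vanishes_low_degree:
  assumes "F \<in> invR" and "d \<in> {2, 3}" and "hom_poly d F"
  shows "F (special_pt a b) = 0"
  using assms special_pt_vanishes_hom2 special_pt_vanishes_hom3 by (auto simp: invR_def)

lemma special_pt_hom4_scale:
  assumes inv: "sl2_invariant F" and hom: "hom_poly 4 F" and "s \<noteq> 0"
  shows "F (special_pt (s * a) (s * b)) = s^2 * F (special_pt a b)"
proof -
  obtain t :: complex where t4: "t^4 = s" using nth_root_exists[of 4 s] by auto
  \<comment> \<open>diag(t, 1/t) scales the x^2-coefficients by t^2 and the x y^3-coefficient by 1/t^2.\<close>
  have "t \<noteq> 0" using t4 \<open>s \<noteq> 0\<close> by auto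
  have "subst_act t 0 0 (1/t) (\<lambda>i. t^2 * special_pt a b i) = special_pt (s * a) (s * b)"
    using \<open>t \<noteq> 0\<close> t4 by (auto simp: fun_eq_iff subst_act_def special_pt_def comp1_def comp2_def comp3_def
        quad_subst_def quartic_subst_def power2_eq_square power3_eq_cube power4_eq_xxxx field_simps)
  moreover have "F (subst_act t 0 0 (1/t) (\<lambda>i. t^2 * special_pt a b i)) = F (\<lambda>i. t^2 * special_pt a b i)"
    using \<open>t \<noteq> 0\<close> by (simp add: sl2_invariant_subst_act[OF inv])
  moreover have "(t^2)^4 = s^2" using t4 by (metis power_mult mult.commute)
  ultimately show ?thesis by (simp add: hom_poly_scale[OF hom])
qed

lemma poly_eq_0_if_vanishes_off:
  fixes p :: "complex poly"
  assumes "\<And>z. z \<noteq> c \<Longrightarrow> poly p z = 0"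
  shows "p = 0"
proof (rule ccontr)
  assume "p \<noteq> 0"
  then have "finite {z. poly p z = 0}" by (rule poly_roots_finite)
  moreover have "UNIV - {c} \<subseteq> {z. poly p z = 0}" using assms by auto
  ultimately have "finite (UNIV - {c})" by (rule finite_subset[rotated])
  then show False by (simp add: infinite_UNIV_char_0)
qed

lemma hom_poly_special_pt_line:
  assumes "hom_poly n F"
  shows "\<exists>p. \<forall>s. F (special_pt (u * s + v) (u' * s + v')) = poly p s"
proof -
  have "special_pt (u * s + v) (u' * s + v')
        = (\<lambda>i. special_pt v v' i + s * (u * basis_sum {0} i + u' * basis_sum {3} i))" for s
    by (simp add: fun_eq_iff special_pt_def basis_sum_def)
  moreover obtain p where
    "\<forall>s. F (\<lambda>i. special_pt v v' i + s * (u * basis_sum {0} i + u' * basis_sum {3} i)) = poly p s"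
    using hom_poly_on_line[OF assms, of "special_pt v v'" "\<lambda>i. u * basis_sum {0} i + u' * basis_sum {3} i"]
    by blast
  ultimately show ?thesis by auto
qed

lemma special_pt_hom4_zero:
  assumes inv: "sl2_invariant F" and hom: "hom_poly 4 F"
  shows "\<exists>a b. (a \<noteq> 0 \<or> b \<noteq> 0) \<and> F (special_pt a b) = 0"
proof -
  obtain p where p: "\<And>b. F (special_pt 1 b) = poly p b"
    using hom_poly_special_pt_line[OF hom, of 0 1 1 0] by auto
  show ?thesis
  proof (cases "\<exists>b. poly p b = 0")
    case True
    then obtain b where "poly p b = 0" by blast
    then show ?thesis using p[of b] by (intro exI[of _ 1] exI[of _ b]) simp
  next
    case False
    then have "constant (poly p)" using fundamental_theorem_of_algebra by blast
    then have "poly p b = poly p 0" for b unfolding constant_def by blast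
    then have c: "F (special_pt 1 b) = poly p 0" for b by (simp add: p)
    obtain p' where p': "\<And>a. F (special_pt a 1) = poly p' a"
      using hom_poly_special_pt_line[OF hom, of 1 0 0 1] by auto
    have "poly p' a = poly [:0, 0, poly p 0:] a" if "a \<noteq> 0" for a
    proof -
      have "poly p' a = a^2 * poly p 0"
        using special_pt_hom4_scale[OF inv hom that, of 1 "1/a"] that c p' by simp
      then show ?thesis by (simp add: power2_eq_square mult.assoc)
    qed
    then have "p' - [:0, 0, poly p 0:] = 0"
      by (intro poly_eq_0_if_vanishes_off[of 0]) simp
    then have "F (special_pt 0 1) = 0" using p'[of 0] by simp
    then show ?thesis by (intro exI[of _ 0] exI[of _ 1]) simp
  qed
qed

section \<open>A joint invariant of a quadratic and a quartic\<close>

definition quad_disc :: "(nat \<Rightarrow> complex) \<Rightarrow> complex" where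
  "quad_disc u = u 1 ^ 2 - 4 * u 0 * u 2"

text \<open>Up to a constant factor, the second transvectant (u, g)_2 of a quadratic u and a quartic g.\<close>

definition quad_quartic_cov :: "(nat \<Rightarrow> complex) \<Rightarrow> (nat \<Rightarrow> complex) \<Rightarrow> nat \<Rightarrow> complex" where
  "quad_quartic_cov u g k =
     (if k = 0 then 2 * u 0 * g 2 - 3 * u 1 * g 1 + 12 * u 2 * g 0
      else if k = 1 then 6 * u 0 * g 3 - 4 * u 1 * g 2 + 6 * u 2 * g 1
      else 12 * u 0 * g 4 - 3 * u 1 * g 3 + 2 * u 2 * g 2)"

definition joint_inv :: "(nat \<Rightarrow> complex) \<Rightarrow> (nat \<Rightarrow> complex) \<Rightarrow> complex" where
  "joint_inv u g = quad_disc (quad_quartic_cov u g)"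

lemma quad_disc_scale: "quad_disc (\<lambda>k. s * u k) = s^2 * quad_disc u"
  by (simp add: quad_disc_def power2_eq_square algebra_simps)

lemma quad_disc_quad_subst: "quad_disc (quad_subst a b c d u) = (a * d - b * c)^2 * quad_disc u"
  by (simp add: quad_disc_def quad_subst_def power2_eq_square algebra_simps)

lemma quad_quartic_cov_subst:
  "quad_quartic_cov (quad_subst a b c d u) (quartic_subst a b c d g)
     = (\<lambda>k. (a * d - b * c)^2 * quad_subst a b c d (quad_quartic_cov u g) k)"
proof
  fix k :: nat
  consider "k = 0" | "k = 1" | "k \<noteq> 0" "k \<noteq> 1" by blast
  then show "quad_quartic_cov (quad_subst a b c d u) (quartic_subst a b c d g) k
      = (a * d - b * c)^2 * quad_subst a b c d (quad_quartic_cov u g) k"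
    by cases (simp_all add: quad_quartic_cov_def quad_subst_def quartic_subst_def
        power2_eq_square power3_eq_cube power4_eq_xxxx algebra_simps)
qed

lemma joint_inv_subst:
  "joint_inv (quad_subst a b c d u) (quartic_subst a b c d g) = (a * d - b * c)^6 * joint_inv u g"
proof -
  have "((a * d - b * c)^2)^2 * (a * d - b * c)^2 = (a * d - b * c)^6"
    by (simp flip: power_mult power_add)
  then show ?thesis
    by (simp add: joint_inv_def quad_quartic_cov_subst quad_disc_scale quad_disc_quad_subst)
qed

lemma joint_inv_cong:
  "(\<forall>k\<le>2. u k = u' k) \<Longrightarrow> (\<forall>k\<le>4. g k = g' k) \<Longrightarrow> joint_inv u g = joint_inv u' g'"
  by (simp add: joint_inv_def quad_disc_def quad_quartic_cov_def)

lemma joint_inv_scale: "joint_inv (\<lambda>k. s * u k) (\<lambda>k. s * g k) = s^4 * joint_inv u g"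
  by (simp add: joint_inv_def quad_disc_def quad_quartic_cov_def power2_eq_square power4_eq_xxxx
      algebra_simps)

lemma sl2_invariant_joint_inv:
  assumes "\<And>a b c d v w. sl2_rel a b c d v w \<Longrightarrow> \<forall>k\<le>2. U w k = quad_subst a b c d (U v) k"
  shows "sl2_invariant (\<lambda>v. joint_inv (U v) (comp3 v))"
  unfolding sl2_invariant_def
proof (intro allI impI)
  fix a b c d v w assume det: "a * d - b * c = 1" and rel: "sl2_rel a b c d v w"
  have "joint_inv (U w) (comp3 w) = joint_inv (quad_subst a b c d (U v)) (quartic_subst a b c d (comp3 v))"
    using assms[OF rel] rel by (intro joint_inv_cong) (simp_all add: sl2_rel_iff_components)
  then show "joint_inv (U w) (comp3 w) = joint_inv (U v) (comp3 v)"
    by (simp add: joint_inv_subst det)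
qed

lemma poly_fun_diff:
  assumes "poly_fun f" and "poly_fun g"
  shows "poly_fun (\<lambda>v. f v - g v)"
proof -
  have "poly_fun (\<lambda>v. f v + (\<lambda>_. -1) v * g v)" by (intro pf_add pf_mult pf_const assms)
  then show ?thesis by simp
qed

lemma poly_fun_quad_disc:
  assumes "\<forall>k\<le>2. poly_fun (\<lambda>v. W v k)"
  shows "poly_fun (\<lambda>v. quad_disc (W v))"
  unfolding quad_disc_def power2_eq_square
  by (intro poly_fun_diff pf_mult pf_const) (simp_all add: assms)

lemma poly_fun_quad_quartic_cov:
  assumes "\<forall>k\<le>2. poly_fun (\<lambda>v. U v k)" and "\<forall>k\<le>4. poly_fun (\<lambda>v. G v k)" and "k \<le> 2"
  shows "poly_fun (\<lambda>v. quad_quartic_cov (U v) (G v) k)"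
proof -
  have "k = 0 \<or> k = 1 \<or> k = 2" using assms(3) by auto
  then show ?thesis
    unfolding quad_quartic_cov_def
    by (elim disjE; simp; intro poly_fun_diff pf_add pf_mult pf_const; simp add: assms)
qed

lemma poly_fun_joint_inv:
  assumes "\<forall>k\<le>2. poly_fun (\<lambda>v. U v k)" and "\<forall>k\<le>4. poly_fun (\<lambda>v. G v k)"
  shows "poly_fun (\<lambda>v. joint_inv (U v) (G v))"
  unfolding joint_inv_def by (intro poly_fun_quad_disc allI impI poly_fun_quad_quartic_cov assms)

definition joint_inv1 :: "(nat \<Rightarrow> complex) \<Rightarrow> complex" where
  "joint_inv1 v = joint_inv (comp1 v) (comp3 v)"

definition joint_inv2 :: "(nat \<Rightarrow> complex) \<Rightarrow> complex" where
  "joint_inv2 v = joint_inv (comp2 v) (comp3 v)"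

lemma joint_inv1_in_invR: "joint_inv1 \<in> invR"
proof -
  have "\<forall>k\<le>2. poly_fun (\<lambda>v. comp1 v k)" "\<forall>k\<le>4. poly_fun (\<lambda>v. comp3 v k)"
    by (auto simp: comp1_def comp3_def intro!: pf_coord)
  then show ?thesis
    using sl2_invariant_joint_inv[of comp1] poly_fun_joint_inv[of comp1 comp3]
    unfolding invR_def joint_inv1_def by (simp add: sl2_rel_iff_components)
qed

lemma joint_inv2_in_invR: "joint_inv2 \<in> invR"
proof -
  have "\<forall>k\<le>2. poly_fun (\<lambda>v. comp2 v k)" "\<forall>k\<le>4. poly_fun (\<lambda>v. comp3 v k)"
    by (auto simp: comp2_def comp3_def intro!: pf_coord)
  then show ?thesis
    using sl2_invariant_joint_inv[of comp2] poly_fun_joint_inv[of comp2 comp3]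
    unfolding invR_def joint_inv2_def by (simp add: sl2_rel_iff_components)
qed

lemma joint_inv1_special_pt: "joint_inv1 (special_pt a b) = 36 * a^2"
  by (simp add: joint_inv1_def joint_inv_def quad_disc_def quad_quartic_cov_def comp1_def comp3_def
      special_pt_def power2_eq_square)

lemma joint_inv2_special_pt: "joint_inv2 (special_pt a b) = 36 * b^2"
  by (simp add: joint_inv2_def joint_inv_def quad_disc_def quad_quartic_cov_def comp2_def comp3_def
      special_pt_def power2_eq_square)

lemma joint_inv1_scale: "joint_inv1 (\<lambda>i. s * v i) = s^4 * joint_inv1 v"
  by (simp add: joint_inv1_def comp1_def comp3_def joint_inv_scale)

lemma joint_inv2_scale: "joint_inv2 (\<lambda>i. s * v i) = s^4 * joint_inv2 v"
  by (simp add: joint_inv2_def comp2_def comp3_def joint_inv_scale)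

section \<open>Non-integrality and the main theorem\<close>

lemma alg_gen_cong: "alg_gen fs c \<Longrightarrow> (\<forall>j<length fs. (fs ! j) v = (fs ! j) w) \<Longrightarrow> c v = c w"
  by (induction rule: alg_gen.induct) auto

lemma not_integral_over_if_vanish_on_ray:
  assumes vanish: "\<And>j s. j < length fs \<Longrightarrow> (fs ! j) (\<lambda>i. s * p i) = 0"
    and scale: "\<And>s. r (\<lambda>i. s * p i) = s ^ k * r p" and "k > 0" and "r p \<noteq> 0"
  shows "\<not> integral_over fs r"
proof
  assume "integral_over fs r"
  then obtain n cs where "n > 0" and cs: "\<And>i. i < n \<Longrightarrow> alg_gen fs (cs i)"
    and eq: "\<And>v. r v ^ n + (\<Sum>i<n. cs i v * r v ^ i) = 0"
    unfolding integral_over_def by blast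
  define \<kappa> where "\<kappa> i = cs i (\<lambda>_. 0)" for i
  have "(fs ! j) (\<lambda>_. 0) = 0" if "j < length fs" for j
    using vanish[OF that, of 0] by simp
  then have cs_ray: "cs i (\<lambda>l. s * p l) = \<kappa> i" if "i < n" for i s
    unfolding \<kappa>_def using alg_gen_cong[OF cs[OF that]] vanish by simp
  have root: "z ^ n + (\<Sum>i<n. \<kappa> i * z ^ i) = 0" for z
  proof -
    obtain s where "s ^ k = z / r p" using nth_root_exists \<open>k > 0\<close> by blast
    then have "r (\<lambda>l. s * p l) = z" using scale \<open>r p \<noteq> 0\<close> by simp
    then show ?thesis using eq[of "\<lambda>l. s * p l"] cs_ray by simp
  qed
  define P where "P = monom 1 n + (\<Sum>i<n. monom (\<kappa> i) i)"
  have "\<forall>z. poly P z = 0" using root by (simp add: P_def poly_monom poly_sum)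
  then have "P = 0" by (simp add: poly_all_0_iff_0)
  moreover have "coeff P n = 1" by (simp add: P_def coeff_sum)
  ultimately show False by simp
qed

lemma unique_index_of_four:
  assumes "mset ds = mset [2, 2, 2, 2, 3, 3, 3, 4::nat]"
  obtains i4 where "i4 < length ds" "ds ! i4 = 4" "\<And>j. j < length ds \<Longrightarrow> j \<noteq> i4 \<Longrightarrow> ds ! j \<in> {2, 3}"
proof -
  have set_ds: "set ds = {2, 3, 4}" using mset_eq_setD[OF assms] by auto
  then obtain i4 where i4: "i4 < length ds" "ds ! i4 = 4" by (metis insertCI in_set_conv_nth)
  have "card {i. i < length ds \<and> ds ! i = 4} = 1"
    using arg_cong[OF assms, of "\<lambda>M. count M 4"]
    by (simp add: count_mset count_list_eq_length_filter length_filter_conv_card eq_commute)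
  then have "j = i4" if "j < length ds" "ds ! j = 4" for j
    using i4 that by (metis (mono_tags, lifting) card_1_singletonE mem_Collect_eq singletonD)
  then have "ds ! j \<in> {2, 3}" if "j < length ds" "j \<noteq> i4" for j
    using that set_ds nth_mem by fastforce
  with i4 show ?thesis using that by blast
qed

lemma hsop_common_special_zero:
  assumes hsop: "is_hsop fs ds" and degs: "mset ds = mset [2, 2, 2, 2, 3, 3, 3, 4]"
  obtains a b where "a \<noteq> 0 \<or> b \<noteq> 0" and "\<And>j. j < length fs \<Longrightarrow> (fs ! j) (special_pt a b) = 0"
proof -
  have len: "length fs = length ds" and
    fs: "\<And>j. j < length fs \<Longrightarrow> fs ! j \<in> invR \<and> hom_poly (ds ! j) (fs ! j)"
    using hsop by (auto simp: is_hsop_def)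
  obtain i4 where i4: "i4 < length ds" "ds ! i4 = 4"
    and low: "\<And>j. j < length ds \<Longrightarrow> j \<noteq> i4 \<Longrightarrow> ds ! j \<in> {2, 3}"
    using unique_index_of_four[OF degs] by blast
  have "sl2_invariant (fs ! i4)" and "hom_poly 4 (fs ! i4)"
    using fs[of i4] i4 len by (auto simp: invR_def)
  from special_pt_hom4_zero[OF this] obtain a b
    where ab: "a \<noteq> 0 \<or> b \<noteq> 0" and "(fs ! i4) (special_pt a b) = 0"
    by blast
  then have "(fs ! j) (special_pt a b) = 0" if "j < length fs" for j
    using special_pt_vanishes_low_degree fs[OF that] low[of j] that len by (cases "j = i4") auto
  with ab that show ?thesis by blast
qed

theorem mainTheorem10:
  shows "(\<nexists>fs ds. is_hsop fs ds \<and> mset ds = mset [2,2,2,2,3,3,3,4]) \<and>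
         (\<forall>F\<in>invR. \<forall>d\<in>{2,3}. hom_poly d F \<longrightarrow> (\<forall>a b. F (special_pt a b) = 0))"
proof (intro conjI notI ballI impI allI)
  fix F d a b
  assume "F \<in> invR" "d \<in> {2::nat, 3}" "hom_poly d F"
  then show "F (special_pt a b) = 0" by (rule special_pt_vanishes_low_degree)
next
  assume "\<exists>fs ds. is_hsop fs ds \<and> mset ds = mset [2,2,2,2,3,3,3,4]"
  then obtain fs ds where hsop: "is_hsop fs ds" and degs: "mset ds = mset [2,2,2,2,3,3,3,4]"
    by blast
  obtain a b where ab: "a \<noteq> 0 \<or> b \<noteq> 0"
    and zero: "\<And>j. j < length fs \<Longrightarrow> (fs ! j) (special_pt a b) = 0"
    using hsop_common_special_zero[OF hsop degs] by blast
  define r where "r = (if a \<noteq> 0 then joint_inv1 else joint_inv2)"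
  have "\<not> integral_over fs r"
  proof (rule not_integral_over_if_vanish_on_ray)
    show "(fs ! j) (\<lambda>i. s * special_pt a b i) = 0" if "j < length fs" for j s
      using hsop that zero[OF that] hom_poly_scale by (fastforce simp: is_hsop_def)
    show "r (\<lambda>i. s * special_pt a b i) = s ^ 4 * r (special_pt a b)" for s
      by (simp add: r_def joint_inv1_scale joint_inv2_scale)
    show "r (special_pt a b) \<noteq> 0"
      using ab by (simp add: r_def joint_inv1_special_pt joint_inv2_special_pt)
  qed simp
  moreover have "r \<in> invR" by (simp add: r_def joint_inv1_in_invR joint_inv2_in_invR)
  ultimately show False using hsop by (auto simp: is_hsop_def)
qed

end
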